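(* Let $(G;+)$ be a commutative groupoid, let $n \geq 4$, and let $M, M'$ be multisets of cardinality $n$ over $G$. Assume that $N_M(x) = N_{M'}(x)$ for all $x \in G$ and that there exists $y \in G$ such that $N_M(y)$ is not a multiple of $\binom{n-1}{2}$. Then there exist $a, b \in G$ such that $M' = M \setminus \langle a\rangle \uplus \langle b\rangle$.
   Context: A (finite) multiset $M$ over a set $X$ is a function $\mathbf{1}_M \colon X \to \mathbb{N}$ with finite support; $\mathbf{1}_M(x)$ is the multiplicity of $x$, and $|M| = \sum_x \mathbf{1}_M(x)$ is its cardinality. Multiset sum $\uplus$ adds multiplicities; the difference $M \setminus M'$ has multiplicities $\max(\mathbf{1}_M(x)-\mathbf{1}_{M'}(x),0)$. $\langle x_1,\dots,x_k\rangle$ denotes the multiset in which each element occurs as often as it appears in the list. $[n]=\{1,\dots,n\}$ and $\binom{[n]}{2}$ is the set of 2-element subsets of $[n]$. A commutative groupoid is a set $G$ with a commutative binary operation $+$ (not necessarily associative). Cards: for a multiset $M$ of cardinality $n \geq 2$ over $G$, fix $(m_1,\dots,m_n) \in G^n$ with $M = \langle m_1,\dots,m_n\rangle$; for $I = \{i,j\} \in \binom{[n]}{2}$ with $i<j$, the card $M_I$ is $M \setminus \langle m_i, m_j\rangle \uplus \langle m_i + m_j\rangle$. $N_M(x)$ denotes the multiplicity of $x$ in the multiset sum $\biguplus_{I \in \binom{[n]}{2}} M_I$ of all cards of $M$. *)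

theory Defs
  imports Main "HOL-Library.Multiset"
begin

definition comm_groupoid :: "('a \<Rightarrow> 'a \<Rightarrow> 'a) \<Rightarrow> bool" where
  "comm_groupoid f \<longleftrightarrow> (\<forall>x y. f x y = f y x)"

text \<open>Card of a list-enumerated multiset (indices 0-based, i < j < length xs):
  M minus <m_i, m_j> plus <m_i + m_j>.\<close>
definition card_of :: "('a \<Rightarrow> 'a \<Rightarrow> 'a) \<Rightarrow> 'a list \<Rightarrow> nat \<Rightarrow> nat \<Rightarrow> 'a multiset" where
  "card_of f xs i j = (mset xs - {#xs ! i, xs ! j#}) + {# f (xs ! i) (xs ! j) #}"

definition deck_sum :: "('a \<Rightarrow> 'a \<Rightarrow> 'a) \<Rightarrow> 'a multiset \<Rightarrow> 'a multiset" where
  "deck_sum f M = (let xs = (SOME xs. mset xs = M) in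
     (\<Sum>p \<in> {(i, j). i < j \<and> j < length xs}. card_of f xs (fst p) (snd p)))"

definition N :: "('a \<Rightarrow> 'a \<Rightarrow> 'a) \<Rightarrow> 'a multiset \<Rightarrow> 'a \<Rightarrow> nat" where
  "N f M x = count (deck_sum f M) x"

end

theory Submission
  imports Defs
begin

text \<open>
  Every element of \<open>M\<close> is removed from exactly \<open>n - 1\<close>
  of the \<open>n choose 2\<close> cards, so the sum of all cards is \<open>((n - 1) choose 2) \<cdot> M + Q\<close>, where
  \<open>Q\<close> is the multiset of the \<open>n choose 2\<close> pairwise sums. Comparing this for \<open>M\<close> and \<open>M'\<close>,
  the elements \<open>M' - M\<close> occur \<open>(n - 1) choose 2\<close> times each in \<open>Q\<close>. For \<open>n \<ge> 4\<close> we have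
  \<open>n choose 2 \<le> 2 \<cdot> ((n - 1) choose 2)\<close>, so \<open>M' - M\<close> has at most two elements, and if it had
  exactly two, \<open>Q\<close> would consist of them alone and every \<open>N\<^sub>M(x)\<close> would be divisible by
  \<open>(n - 1) choose 2\<close>.
\<close>

lemma Suc_choose_two: "Suc n choose 2 = (n choose 2) + n"
  by (simp add: numeral_2_eq_2)

lemma choose_two_eq_pred_choose_two: "n choose 2 = ((n - 1) choose 2) + (n - 1)"
  by (cases n) (simp_all add: Suc_choose_two)

lemma choose_two_le_twice_pred_choose_two:
  assumes "4 \<le> n"
  shows "n choose 2 \<le> 2 * ((n - 1) choose 2)"
proof -
  obtain m where "n = m + 4"
    using assms by (metis add.commute le_Suc_ex)
  then have "n = Suc (Suc (Suc (Suc m)))"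
    by simp
  then show ?thesis
    by (simp add: Suc_choose_two)
qed

definition index_pairs :: "nat \<Rightarrow> (nat \<times> nat) set" where
  "index_pairs n = {(i, j). i < j \<and> j < n}"

lemma finite_index_pairs [simp]: "finite (index_pairs n)"
  unfolding index_pairs_def by (rule finite_subset[of _ "{..<n} \<times> {..<n}"]) auto

lemma sum_index_pairs_Suc:
  "(\<Sum>p\<in>index_pairs (Suc n). g p) = (\<Sum>p\<in>index_pairs n. g p) + (\<Sum>i<n. g (i, n))"
proof -
  have "index_pairs (Suc n) = index_pairs n \<union> (\<lambda>i. (i, n)) ` {..<n}"
    and "index_pairs n \<inter> (\<lambda>i. (i, n)) ` {..<n} = {}"
    by (auto simp: index_pairs_def)
  then show ?thesis
    by (simp add: sum.union_disjoint sum.reindex inj_on_def)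
qed

lemma card_index_pairs: "card (index_pairs n) = n choose 2"
proof (induction n)
  case 0
  then show ?case by (simp add: index_pairs_def)
next
  case (Suc n)
  have "card (index_pairs (Suc n)) = card (index_pairs n) + n"
    using sum_index_pairs_Suc[of "\<lambda>_. 1 :: nat" n] by simp
  with Suc show ?case
    by (simp add: Suc_choose_two)
qed

lemma sum_constant_repeat_mset: "(\<Sum>i\<in>I. A) = repeat_mset (card I) A"
  by (induction I rule: infinite_finite_induct) simp_all

lemma sum_index_pairs_repeat_mset:
  fixes g :: "nat \<Rightarrow> 'a multiset"
  shows "(\<Sum>(i, j)\<in>index_pairs n. g i + g j) = repeat_mset (n - 1) (\<Sum>k<n. g k)"
proof (induction n)
  case 0
  then show ?case by (simp add: index_pairs_def)
next
  case (Suc n)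
  then show ?case
    by (cases n) (simp_all add: sum_index_pairs_Suc sum.distrib sum_constant_repeat_mset add_ac)
qed

lemma mset_conv_sum_nth: "mset xs = (\<Sum>k<length xs. {#xs ! k#})"
proof (induction xs rule: rev_induct)
  case (snoc a xs)
  have "(\<Sum>k<length xs. {#(xs @ [a]) ! k#}) = (\<Sum>k<length xs. {#xs ! k#})"
    by (rule sum.cong) (simp_all add: nth_append)
  with snoc show ?case by simp
qed simp

definition pair_sums :: "('a \<Rightarrow> 'a \<Rightarrow> 'a) \<Rightarrow> 'a list \<Rightarrow> 'a multiset" where
  "pair_sums f xs = (\<Sum>(i, j)\<in>index_pairs (length xs). {#f (xs ! i) (xs ! j)#})"

lemma size_pair_sums: "size (pair_sums f xs) = length xs choose 2"
proof -
  have "size (\<Sum>p\<in>A. {#g p#}) = card A" if "finite A" for A and g :: "nat \<times> nat \<Rightarrow> 'a"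
    using that by (induction A rule: finite_induct) auto
  then show ?thesis
    by (simp add: pair_sums_def case_prod_beta card_index_pairs)
qed

lemma pair_subseteq_mset_nth:
  assumes "i \<noteq> j" "i < length xs" "j < length xs"
  shows "{#xs ! i, xs ! j#} \<subseteq># mset xs"
proof -
  have "{#xs ! i, xs ! j#} = (\<Sum>k\<in>{i, j}. {#xs ! k#})"
    using assms(1) by simp
  also have "\<dots> \<subseteq># (\<Sum>k<length xs. {#xs ! k#})"
    using assms(2,3) sum.subset_diff[of "{i, j}" "{..<length xs}" "\<lambda>k. {#xs ! k#}"] by simp
  finally show ?thesis
    by (simp add: mset_conv_sum_nth)
qed

lemma sum_card_of:
  "(\<Sum>(i, j)\<in>index_pairs (length xs). card_of f xs i j)
     = repeat_mset ((length xs - 1) choose 2) (mset xs) + pair_sums f xs"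
proof -
  define n where "n = length xs"
  define R where "R = (\<lambda>(i, j). mset xs - {#xs ! i, xs ! j#})"
  have restore: "R p + ({#xs ! fst p#} + {#xs ! snd p#}) = mset xs" if "p \<in> index_pairs n" for p
    using that subset_mset.diff_add[OF pair_subseteq_mset_nth[of "fst p" "snd p" xs]]
    by (auto simp: R_def n_def index_pairs_def case_prod_beta add_mset_commute)
  have removed: "(\<Sum>p\<in>index_pairs n. {#xs ! fst p#} + {#xs ! snd p#}) = repeat_mset (n - 1) (mset xs)"
    using sum_index_pairs_repeat_mset[of "\<lambda>k. {#xs ! k#}" n]
    by (simp add: case_prod_beta mset_conv_sum_nth n_def)
  have "(\<Sum>p\<in>index_pairs n. R p) + repeat_mset (n - 1) (mset xs)
        = (\<Sum>p\<in>index_pairs n. R p + ({#xs ! fst p#} + {#xs ! snd p#}))"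
    by (simp only: removed[symmetric] sum.distrib)
  also have "\<dots> = (\<Sum>p\<in>index_pairs n. mset xs)"
    using restore by (rule sum.cong[OF refl])
  also have "\<dots> = repeat_mset (((n - 1) choose 2) + (n - 1)) (mset xs)"
    by (simp only: sum_constant_repeat_mset card_index_pairs flip: choose_two_eq_pred_choose_two)
  finally have "(\<Sum>p\<in>index_pairs n. R p) = repeat_mset ((n - 1) choose 2) (mset xs)"
    by (simp add: repeat_mset_distrib)
  then show ?thesis
    unfolding card_of_def pair_sums_def n_def[symmetric] case_prod_beta sum.distrib
    by (simp only: R_def case_prod_beta)
qed

lemma deck_sum_eq_repeat_mset_plus_pair_sums:
  "\<exists>xs. mset xs = M \<and> deck_sum f M = repeat_mset ((size M - 1) choose 2) M + pair_sums f xs"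
proof -
  define xs where "xs = (SOME xs. mset xs = M)"
  have xs: "mset xs = M"
    unfolding xs_def by (rule someI_ex) (rule ex_mset)
  have "deck_sum f M = (\<Sum>(i, j)\<in>index_pairs (length xs). card_of f xs i j)"
    by (simp add: deck_sum_def xs_def[symmetric] index_pairs_def case_prod_beta)
  with xs show ?thesis
    by (metis sum_card_of size_mset)
qed

lemma exchange_one_if_size_diff_le_1:
  assumes "size M = size M'" "size (M' - M) \<le> 1" "M \<noteq> {#}"
  shows "\<exists>a b. M' = M - {#a#} + {#b#}"
proof -
  have M': "M' = M - (M - M') + (M' - M)"
    by (rule multiset_eqI) simp
  have "size (M - M') = size (M' - M)"
    using assms(1) by (simp add: size_Diff_subset_Int subset_mset.inf_commute)
  show ?thesis
  proof (cases "size (M' - M) = 0")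
    case True
    then have "M' = M"
      using M' \<open>size (M - M') = size (M' - M)\<close> by simp
    moreover obtain a where "a \<in># M"
      using assms(3) by blast
    ultimately show ?thesis
      by (metis insert_DiffM2 add_mset_add_single)
  next
    case False
    have "size (M - M') = 1" "size (M' - M) = 1"
      using False assms(2) \<open>size (M - M') = size (M' - M)\<close> by linarith+
    then obtain a b where "M - M' = {#a#}" "M' - M = {#b#}"
      by (metis size_1_singleton_mset)
    with M' show ?thesis
      by metis
  qed
qed

lemma repeat_mset_diff_subseteq:
  assumes "repeat_mset c M + Q = repeat_mset c M' + Q'"
  shows "repeat_mset c (M' - M) \<subseteq># Q"
proof (rule mset_subset_eqI)
  fix x
  have "c * count M x + count Q x = c * count M' x + count Q' x"
    using arg_cong[OF assms, of "\<lambda>A. count A x"] by simp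
  then show "count (repeat_mset c (M' - M)) x \<le> count Q x"
    by (simp add: diff_mult_distrib2)
qed

lemma exchange_one_of_repeat_mset_eq:
  fixes c :: nat
  assumes eq: "repeat_mset c M + Q = repeat_mset c M' + Q'"
    and size: "size M = size M'" and "M \<noteq> {#}" and "0 < c" and size_Q: "size Q \<le> 2 * c"
    and not_dvd: "\<not> c dvd count (repeat_mset c M + Q) y"
  shows "\<exists>a b. M' = M - {#a#} + {#b#}"
proof -
  define B where "B = M' - M"
  have sub: "repeat_mset c B \<subseteq># Q"
    unfolding B_def by (rule repeat_mset_diff_subseteq[OF eq])
  then have "c * size B \<le> c * 2"
    using size_mset_mono[OF sub] size_Q by (metis order_trans mult.commute size_repeat_mset)
  then have "size B \<le> 2"
    using \<open>0 < c\<close> by simp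
  moreover have "size B \<noteq> 2"
  proof
    assume "size B = 2"
    then have "\<not> repeat_mset c B \<subset># Q"
      using size_Q by (auto dest: mset_subset_size)
    then have "Q = repeat_mset c B"
      using sub by (simp add: subset_mset.le_less)
    with not_dvd show False
      by (simp add: distrib_left[symmetric])
  qed
  ultimately show ?thesis
    using exchange_one_if_size_diff_le_1[OF size _ \<open>M \<noteq> {#}\<close>] by (simp add: B_def)
qed

theorem mainTheorem2:
  fixes f :: "'a \<Rightarrow> 'a \<Rightarrow> 'a" and M M' :: "'a multiset" and n :: nat
  assumes "comm_groupoid f"
    and "n \<ge> 4"
    and "size M = n" and "size M' = n"
    and "\<forall>x. N f M x = N f M' x"
    and "\<exists>y. \<not> ((n - 1) choose 2) dvd N f M y"
  shows "\<exists>a b. M' = (M - {#a#}) + {#b#}"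
proof -
  define C where "C = (n - 1) choose 2"
  obtain xs where xs: "mset xs = M" and deck: "deck_sum f M = repeat_mset C M + pair_sums f xs"
    using deck_sum_eq_repeat_mset_plus_pair_sums assms(3) C_def by blast
  obtain xs' where deck': "deck_sum f M' = repeat_mset C M' + pair_sums f xs'"
    using deck_sum_eq_repeat_mset_plus_pair_sums assms(4) C_def by blast
  have "deck_sum f M = deck_sum f M'"
    using assms(5) by (simp add: N_def multiset_eq_iff)
  then have eq: "repeat_mset C M + pair_sums f xs = repeat_mset C M' + pair_sums f xs'"
    using deck deck' by simp
  have "size M = size M'"
    using assms(3,4) by simp
  moreover have "M \<noteq> {#}" and "0 < C"
    using assms(2,3) by (auto simp: C_def)
  moreover have "size (pair_sums f xs) \<le> 2 * C"
    using choose_two_le_twice_pred_choose_two[OF assms(2)] xs assms(3)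
    by (auto simp: size_pair_sums C_def)
  moreover obtain y where "\<not> C dvd count (repeat_mset C M + pair_sums f xs) y"
    using assms(6) deck by (auto simp: C_def N_def)
  ultimately show ?thesis
    by (rule exchange_one_of_repeat_mset_eq[OF eq])
qed

end
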